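(* Let $E_1,E_2,E_3,H_1,H_2,H_3$ be logically independent events with $H_i\ne\emptyset$. For every $(x_1,x_2,x_3)\in[0,1]^3$ the assessment $$\mathcal M=(x_1,x_2,x_3,x_1x_2,x_1x_3,x_2x_3,x_1x_2x_3)$$ on $\mathcal F=\{\mathscr C_1,\mathscr C_2,\mathscr C_3,\mathscr C_{12},\mathscr C_{13},\mathscr C_{23},\mathscr C_{123}\}$ is coherent. Moreover, under this assessment, as random quantities $\mathscr C_{ij}=\mathscr C_i\mathscr C_j$ for $i\ne j$ and $\mathscr C_{123}=\mathscr C_1\mathscr C_2\mathscr C_3$.
   Context: Events are identified with their indicators; $\bar E$ is the negation of $E$. For $H\ne\emptyset$ the conditional event $E|H$ is true if $EH$ is true, false if $\bar EH$ is true, void if $\bar H$ is true; with $P(E|H)=x$ it is identified with the random quantity $EH+x\bar H$, and a conditional random quantity $X|H$ with prevision $\mu$ with $XH+\mu\bar H$. Coherence (de Finetti): an assessment $(\mu_1,\dots,\mu_m)$ on $\{X_1|H_1,\dots,X_m|H_m\}$ is coherent iff for all real stakes $s_i$ the gain $G=\sum_is_iH_i(X_i-\mu_i)$, restricted to $H_1\vee\dots\vee H_m$, satisfies $\min G\le0\le\max G$. Logical independence: all conjunctions of the listed events or their negations are nonempty. Notation: $\mathscr C_i=E_i|H_i$, $\mathscr C_{ij}=(E_i|H_i)\wedge(E_j|H_j)$, $\mathscr C_{123}=(E_1|H_1)\wedge(E_2|H_2)\wedge(E_3|H_3)$, with previsions $x_i,x_{ij},x_{123}$ in the order of $\mathcal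 F$. Conjunction of two: $\mathscr C_{ij}$ equals $1$ if $E_iH_iE_jH_j$ true, $0$ if $\bar E_iH_i\vee\bar E_jH_j$ true, $x_i$ if $\bar H_iE_jH_j$ true, $x_j$ if $\bar H_jE_iH_i$ true, $x_{ij}$ if $\bar H_i\bar H_j$ true. $\mathscr C_{123}$ equals $1$ if $E_1H_1E_2H_2E_3H_3$ true; $0$ if $\bar E_1H_1\vee\bar E_2H_2\vee\bar E_3H_3$ true; $x_1$, $x_2$, $x_3$ if respectively $\bar H_1E_2H_2E_3H_3$, $\bar H_2E_1H_1E_3H_3$, $\bar H_3E_1H_1E_2H_2$ true; $x_{12}$, $x_{13}$, $x_{23}$ if respectively $\bar H_1\bar H_2E_3H_3$, $\bar H_1\bar H_3E_2H_2$, $\bar H_2\bar H_3E_1H_1$ true; $x_{123}$ if $\bar H_1\bar H_2\bar H_3$ true. *)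

theory Defs
  imports Complex_Main
begin

definition ind :: "'w set \<Rightarrow> 'w \<Rightarrow> real" where
  "ind A w = (if w \<in> A then 1 else 0)"

definition logically_independent :: "'w set list \<Rightarrow> bool" where
  "logically_independent As \<longleftrightarrow>
     (\<forall>b :: nat \<Rightarrow> bool. \<exists>w. \<forall>i < length As. (w \<in> As ! i \<longleftrightarrow> b i))"

text \<open>Coherence (de Finetti) of a prevision assessment on a family of conditional random
  quantities X_i|H_i, given as triples (X_i, H_i, mu_i): for all real stakes s_i, the gain
  G = sum_i s_i H_i (X_i - mu_i), restricted to H_1 \<or> ... \<or> H_m, satisfies min G \<le> 0 \<le> max G.\<close>
definition gain :: "(('w \<Rightarrow> real) \<times> 'w set \<times> real) list \<Rightarrow> (nat \<Rightarrow> real) \<Rightarrow> 'w \<Rightarrow> real" where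
  "gain F s w = (\<Sum>i<length F. s i * ind (fst (snd (F ! i))) w
                    * (fst (F ! i) w - snd (snd (F ! i))))"

definition coherent :: "(('w \<Rightarrow> real) \<times> 'w set \<times> real) list \<Rightarrow> bool" where
  "coherent F \<longleftrightarrow>
     (\<forall>s :: nat \<Rightarrow> real.
        (\<exists>w \<in> (\<Union>i<length F. fst (snd (F ! i))). gain F s w \<le> 0) \<and>
        (\<exists>w \<in> (\<Union>i<length F. fst (snd (F ! i))). 0 \<le> gain F s w))"

text \<open>Conditional event E|H with P(E|H)=x, as the random quantity EH + x(not H).\<close>
definition cev :: "'w set \<Rightarrow> 'w set \<Rightarrow> real \<Rightarrow> 'w \<Rightarrow> real" where
  "cev E H x w = (if w \<in> H then ind E w else x)"

text \<open>Conjunction (E_i|H_i) \<and> (E_j|H_j) with previsions x_i, x_j, x_ij.\<close>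
definition conj2 :: "'w set \<Rightarrow> 'w set \<Rightarrow> real \<Rightarrow> 'w set \<Rightarrow> 'w set \<Rightarrow> real \<Rightarrow> real \<Rightarrow> 'w \<Rightarrow> real" where
  "conj2 Ei Hi xi Ej Hj xj xij w =
     (if w \<in> Ei \<inter> Hi \<inter> Ej \<inter> Hj then 1
      else if w \<in> (Hi - Ei) \<union> (Hj - Ej) then 0
      else if w \<notin> Hi \<and> w \<in> Ej \<inter> Hj then xi
      else if w \<notin> Hj \<and> w \<in> Ei \<inter> Hi then xj
      else xij)"

text \<open>Conjunction (E_1|H_1) \<and> (E_2|H_2) \<and> (E_3|H_3) with previsions x1,x2,x3,x12,x13,x23,x123.\<close>
definition conj3 :: "'w set \<Rightarrow> 'w set \<Rightarrow> 'w set \<Rightarrow> 'w set \<Rightarrow> 'w set \<Rightarrow> 'w set \<Rightarrow>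
    real \<Rightarrow> real \<Rightarrow> real \<Rightarrow> real \<Rightarrow> real \<Rightarrow> real \<Rightarrow> real \<Rightarrow> 'w \<Rightarrow> real" where
  "conj3 E1 H1 E2 H2 E3 H3 x1 x2 x3 x12 x13 x23 x123 w =
     (if w \<in> E1 \<inter> H1 \<inter> E2 \<inter> H2 \<inter> E3 \<inter> H3 then 1
      else if w \<in> (H1 - E1) \<union> (H2 - E2) \<union> (H3 - E3) then 0
      else if w \<notin> H1 \<and> w \<in> E2 \<inter> H2 \<inter> E3 \<inter> H3 then x1
      else if w \<notin> H2 \<and> w \<in> E1 \<inter> H1 \<inter> E3 \<inter> H3 then x2
      else if w \<notin> H3 \<and> w \<in> E1 \<inter> H1 \<inter> E2 \<inter> H2 then x3
      else if w \<notin> H1 \<and> w \<notin> H2 \<and> w \<in> E3 \<inter> H3 then x12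
      else if w \<notin> H1 \<and> w \<notin> H3 \<and> w \<in> E2 \<inter> H2 then x13
      else if w \<notin> H2 \<and> w \<notin> H3 \<and> w \<in> E1 \<inter> H1 then x23
      else x123)"

end

theory Submission
  imports Defs
begin

text \<open>Under the product assessment each conjunction is the product of the conditional events
  \<open>\<C>\<^sub>i = E\<^sub>i|H\<^sub>i\<close>, so the gain for stakes \<open>s\<close> is \<open>f(\<C>\<^sub>1,\<C>\<^sub>2,\<C>\<^sub>3) - f(x\<^sub>1,x\<^sub>2,x\<^sub>3)\<close> for a
  polynomial \<open>f\<close> that is affine in each variable. Such an \<open>f\<close> attains its minimum and maximum
  over \<open>[0,1]\<^sup>3\<close> at vertices, and by logical independence every vertex is the value of
  \<open>(\<C>\<^sub>1,\<C>\<^sub>2,\<C>\<^sub>3)\<close> at some outcome where all \<open>H\<^sub>i\<close> are true. Hence the gain takes a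
  nonpositive and a nonnegative value on \<open>H\<^sub>1 \<or> H\<^sub>2 \<or> H\<^sub>3\<close>.\<close>

definition cond_rq :: "('w \<Rightarrow> real) \<times> 'w set \<times> real \<Rightarrow> 'w \<Rightarrow> real" where
  "cond_rq F w = (if w \<in> fst (snd F) then fst F w else snd (snd F))"

lemma gain_eq_sum_cond_rq:
  "gain F s w = (\<Sum>i<length F. s i * (cond_rq (F ! i) w - snd (snd (F ! i))))"
  unfolding gain_def cond_rq_def ind_def by (intro sum.cong) auto

lemma cond_rq_ind: "cond_rq (ind E, H, x) = cev E H x"
  by (auto simp: cond_rq_def cev_def)

lemma cond_rq_eq_self:
  assumes "\<And>w. w \<notin> H \<Longrightarrow> X w = x"
  shows "cond_rq (X, H, x) = X"
  using assms by (auto simp: cond_rq_def)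

lemma cond_rq_conj2: "cond_rq (conj2 Ei Hi xi Ej Hj xj xij, Hi \<union> Hj, xij) = conj2 Ei Hi xi Ej Hj xj xij"
  by (rule cond_rq_eq_self) (simp add: conj2_def)

lemma cond_rq_conj3:
  "cond_rq (conj3 E1 H1 E2 H2 E3 H3 x1 x2 x3 x12 x13 x23 x123, H1 \<union> H2 \<union> H3, x123)
     = conj3 E1 H1 E2 H2 E3 H3 x1 x2 x3 x12 x13 x23 x123"
  by (rule cond_rq_eq_self) (simp add: conj3_def)

lemma conj2_eq_cev_mult: "conj2 E H x E' H' x' (x * x') w = cev E H x w * cev E' H' x' w"
  unfolding conj2_def cev_def ind_def
  by (cases "w \<in> H"; cases "w \<in> H'"; cases "w \<in> E"; cases "w \<in> E'"; simp)

lemma conj3_eq_cev_mult: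
  "conj3 E1 H1 E2 H2 E3 H3 x1 x2 x3 (x1 * x2) (x1 * x3) (x2 * x3) (x1 * x2 * x3) w
     = cev E1 H1 x1 w * cev E2 H2 x2 w * cev E3 H3 x3 w"
  unfolding conj3_def cev_def ind_def
  by (cases "w \<in> H1"; cases "w \<in> H2"; cases "w \<in> H3"; cases "w \<in> E1"; cases "w \<in> E2";
      cases "w \<in> E3"; simp)

lemma convex_combination_ge_endpoint:
  fixes a p q :: real
  assumes "0 \<le> a" "a \<le> 1"
  shows "\<exists>v\<in>{0,1}. (1 - v) * p + v * q \<le> (1 - a) * p + a * q"
proof (cases "p \<le> q")
  case True
  with assms have "a * p \<le> a * q" by (simp add: mult_left_mono)
  then show ?thesis by (intro bexI[of _ 0]) (auto simp: algebra_simps)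
next
  case False
  with assms have "(1 - a) * q \<le> (1 - a) * p" by (simp add: mult_left_mono)
  then show ?thesis by (intro bexI[of _ 1]) (auto simp: algebra_simps)
qed

lemma multiaffine_min_at_vertex:
  fixes f :: "real \<Rightarrow> real \<Rightarrow> real \<Rightarrow> real"
  assumes aff1: "\<And>a b c. f a b c = (1 - a) * f 0 b c + a * f 1 b c"
    and aff2: "\<And>a b c. f a b c = (1 - b) * f a 0 c + b * f a 1 c"
    and aff3: "\<And>a b c. f a b c = (1 - c) * f a b 0 + c * f a b 1"
    and "a \<in> {0..1}" "b \<in> {0..1}" "c \<in> {0..1}"
  shows "\<exists>u\<in>{0,1}. \<exists>v\<in>{0,1}. \<exists>t\<in>{0,1}. f u v t \<le> f a b c"
proof -
  obtain u where u: "u \<in> {0,1}" "f u b c \<le> f a b c"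
    using convex_combination_ge_endpoint[of a "f 0 b c" "f 1 b c"] assms(4) aff1
    by (metis atLeastAtMost_iff)
  obtain v where v: "v \<in> {0,1}" "f u v c \<le> f u b c"
    using convex_combination_ge_endpoint[of b "f u 0 c" "f u 1 c"] assms(5) aff2
    by (metis atLeastAtMost_iff)
  obtain t where t: "t \<in> {0,1}" "f u v t \<le> f u v c"
    using convex_combination_ge_endpoint[of c "f u v 0" "f u v 1"] assms(6) aff3
    by (metis atLeastAtMost_iff)
  show ?thesis using u v t by force
qed

lemma multiaffine_max_at_vertex:
  fixes f :: "real \<Rightarrow> real \<Rightarrow> real \<Rightarrow> real"
  assumes aff1: "\<And>a b c. f a b c = (1 - a) * f 0 b c + a * f 1 b c"
    and aff2: "\<And>a b c. f a b c = (1 - b) * f a 0 c + b * f a 1 c"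
    and aff3: "\<And>a b c. f a b c = (1 - c) * f a b 0 + c * f a b 1"
    and "a \<in> {0..1}" "b \<in> {0..1}" "c \<in> {0..1}"
  shows "\<exists>u\<in>{0,1}. \<exists>v\<in>{0,1}. \<exists>t\<in>{0,1}. f a b c \<le> f u v t"
proof -
  have "\<exists>u\<in>{0,1}. \<exists>v\<in>{0,1}. \<exists>t\<in>{0,1}. - f u v t \<le> - f a b c"
  proof (rule multiaffine_min_at_vertex[where f = "\<lambda>a b c. - f a b c"])
    show "- f a b c = (1 - a) * - f 0 b c + a * - f 1 b c" for a b c
      by (subst aff1) (simp add: algebra_simps)
    show "- f a b c = (1 - b) * - f a 0 c + b * - f a 1 c" for a b c
      by (subst aff2) (simp add: algebra_simps)
    show "- f a b c = (1 - c) * - f a b 0 + c * - f a b 1" for a b c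
      by (subst aff3) (simp add: algebra_simps)
  qed (use assms(4-6) in auto)
  then show ?thesis by auto
qed

definition monomials3 :: "real \<Rightarrow> real \<Rightarrow> real \<Rightarrow> real list" where
  "monomials3 a b c = [a, b, c, a * b, a * c, b * c, a * b * c]"

definition monomial_sum :: "(nat \<Rightarrow> real) \<Rightarrow> real \<Rightarrow> real \<Rightarrow> real \<Rightarrow> real" where
  "monomial_sum s a b c = (\<Sum>i<7. s i * monomials3 a b c ! i)"

lemma multiaffine_monomial_sum:
  shows "monomial_sum s a b c = (1 - a) * monomial_sum s 0 b c + a * monomial_sum s 1 b c"
    and "monomial_sum s a b c = (1 - b) * monomial_sum s a 0 c + b * monomial_sum s a 1 c"
    and "monomial_sum s a b c = (1 - c) * monomial_sum s a b 0 + c * monomial_sum s a b 1"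
  unfolding monomial_sum_def monomials3_def
  by (simp_all add: numeral_eq_Suc lessThan_Suc algebra_simps)

lemma coherent_if_monomials3:
  fixes F :: "(('w \<Rightarrow> real) \<times> 'w set \<times> real) list"
  assumes cond_values: "\<And>w. map (\<lambda>X. cond_rq X w) F = monomials3 (a w) (b w) (c w)"
    and previsions: "map (\<lambda>X. snd (snd X)) F = monomials3 x1 x2 x3"
    and vertices: "\<And>u v t. u \<in> {0,1} \<Longrightarrow> v \<in> {0,1} \<Longrightarrow> t \<in> {0,1} \<Longrightarrow>
      \<exists>w\<in>(\<Union>i<length F. fst (snd (F ! i))). a w = u \<and> b w = v \<and> c w = t"
    and "x1 \<in> {0..1}" "x2 \<in> {0..1}" "x3 \<in> {0..1}"
  shows "coherent F"
  unfolding coherent_def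
proof (intro allI conjI)
  fix s :: "nat \<Rightarrow> real"
  let ?f = "monomial_sum s"
  have len: "length F = 7"
    using arg_cong[OF previsions, of length] by (simp add: monomials3_def)
  have gain: "gain F s w = ?f (a w) (b w) (c w) - ?f x1 x2 x3" for w
  proof -
    have "cond_rq (F ! i) w = monomials3 (a w) (b w) (c w) ! i"
      and "snd (snd (F ! i)) = monomials3 x1 x2 x3 ! i" if "i < 7" for i
      using arg_cong[OF cond_values[of w], of "\<lambda>l. l ! i"] arg_cong[OF previsions, of "\<lambda>l. l ! i"]
        that len by simp_all
    then show ?thesis
      unfolding gain_eq_sum_cond_rq len monomial_sum_def
      by (simp add: sum_subtractf[symmetric] right_diff_distrib)
  qed
  note affine = multiaffine_monomial_sum[of s]
  obtain u v t where "u \<in> {0,1}" "v \<in> {0,1}" "t \<in> {0,1}" and min: "?f u v t \<le> ?f x1 x2 x3"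
    using multiaffine_min_at_vertex[OF affine assms(4-6)] by blast
  with vertices obtain w where "w \<in> (\<Union>i<length F. fst (snd (F ! i)))" "a w = u" "b w = v" "c w = t"
    by blast
  with min gain show "\<exists>w\<in>(\<Union>i<length F. fst (snd (F ! i))). gain F s w \<le> 0"
    by (intro bexI[of _ w]) simp_all
  obtain u v t where "u \<in> {0,1}" "v \<in> {0,1}" "t \<in> {0,1}" and max: "?f x1 x2 x3 \<le> ?f u v t"
    using multiaffine_max_at_vertex[OF affine assms(4-6)] by blast
  with vertices obtain w where "w \<in> (\<Union>i<length F. fst (snd (F ! i)))" "a w = u" "b w = v" "c w = t"
    by blast
  with max gain show "\<exists>w\<in>(\<Union>i<length F. fst (snd (F ! i))). 0 \<le> gain F s w"
    by (intro bexI[of _ w]) simp_all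
qed

lemma logically_independent_vertex:
  assumes "logically_independent [E1, E2, E3, H1, H2, H3]"
    and "u \<in> {0,1}" "v \<in> {0,1}" "t \<in> {0,1}"
  shows "\<exists>w \<in> H1 \<inter> H2 \<inter> H3. cev E1 H1 x1 w = u \<and> cev E2 H2 x2 w = v \<and> cev E3 H3 x3 w = t"
proof -
  obtain w where w: "\<forall>i < length [E1, E2, E3, H1, H2, H3].
      w \<in> [E1, E2, E3, H1, H2, H3] ! i \<longleftrightarrow> [u = 1, v = 1, t = 1, True, True, True] ! i"
    using assms(1) unfolding logically_independent_def by blast
  have "w \<in> E1 \<longleftrightarrow> u = 1" "w \<in> E2 \<longleftrightarrow> v = 1" "w \<in> E3 \<longleftrightarrow> t = 1" "w \<in> H1" "w \<in> H2" "w \<in> H3"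
    using w[rule_format, of 0] w[rule_format, of 1] w[rule_format, of 2]
      w[rule_format, of 3] w[rule_format, of 4] w[rule_format, of 5]
    by (simp_all add: numeral_eq_Suc)
  with assms(2-4) show ?thesis by (intro bexI[of _ w]) (auto simp: cev_def ind_def)
qed

theorem theorem23:
  fixes E1 E2 E3 H1 H2 H3 :: "'w set" and x1 x2 x3 :: real
  assumes indep: "logically_independent [E1, E2, E3, H1, H2, H3]"
    and H1: "H1 \<noteq> {}" and H2: "H2 \<noteq> {}" and H3: "H3 \<noteq> {}"
    and x1: "x1 \<in> {0..1}" and x2: "x2 \<in> {0..1}" and x3: "x3 \<in> {0..1}"
  shows "coherent
           [(ind E1, H1, x1), (ind E2, H2, x2), (ind E3, H3, x3),
            (conj2 E1 H1 x1 E2 H2 x2 (x1 * x2), H1 \<union> H2, x1 * x2),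
            (conj2 E1 H1 x1 E3 H3 x3 (x1 * x3), H1 \<union> H3, x1 * x3),
            (conj2 E2 H2 x2 E3 H3 x3 (x2 * x3), H2 \<union> H3, x2 * x3),
            (conj3 E1 H1 E2 H2 E3 H3 x1 x2 x3 (x1 * x2) (x1 * x3) (x2 * x3) (x1 * x2 * x3),
               H1 \<union> H2 \<union> H3, x1 * x2 * x3)]
       \<and> (\<forall>w. conj2 E1 H1 x1 E2 H2 x2 (x1 * x2) w = cev E1 H1 x1 w * cev E2 H2 x2 w)
       \<and> (\<forall>w. conj2 E1 H1 x1 E3 H3 x3 (x1 * x3) w = cev E1 H1 x1 w * cev E3 H3 x3 w)
       \<and> (\<forall>w. conj2 E2 H2 x2 E3 H3 x3 (x2 * x3) w = cev E2 H2 x2 w * cev E3 H3 x3 w)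
       \<and> (\<forall>w. conj3 E1 H1 E2 H2 E3 H3 x1 x2 x3 (x1 * x2) (x1 * x3) (x2 * x3) (x1 * x2 * x3) w
               = cev E1 H1 x1 w * cev E2 H2 x2 w * cev E3 H3 x3 w)"
  (is "coherent ?F \<and> _")
proof -
  have "coherent ?F"
  proof (rule coherent_if_monomials3[OF _ _ _ x1 x2 x3])
    fix u v t :: real
    assume "u \<in> {0,1}" "v \<in> {0,1}" "t \<in> {0,1}"
    with indep obtain w where "w \<in> H1 \<inter> H2 \<inter> H3"
      "cev E1 H1 x1 w = u \<and> cev E2 H2 x2 w = v \<and> cev E3 H3 x3 w = t"
      by (metis logically_independent_vertex)
    then show "\<exists>w\<in>(\<Union>i<length ?F. fst (snd (?F ! i))).
        cev E1 H1 x1 w = u \<and> cev E2 H2 x2 w = v \<and> cev E3 H3 x3 w = t"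
      by (intro bexI[of _ w] UN_I[of 0]) auto
  qed (simp_all add: monomials3_def cond_rq_ind cond_rq_conj2 cond_rq_conj3
        conj2_eq_cev_mult conj3_eq_cev_mult)
  then show ?thesis by (simp add: conj2_eq_cev_mult conj3_eq_cev_mult)
qed

end
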